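(* Consider Dynamic A* (with \texttt{reeval} true or false) using a dyn-monotonic dynamic heuristic. Let $\langle s,\hat g,\hat h\rangle$ be an entry popped from Open at time $t_{\mathrm{pop}}$ (the start $\langle i,0\rangle$ of some iteration $i$). If $s\notin$ Closed at time $t_{\mathrm{pop}}$, then $\hat g+\hat h\le g^{t_{\mathrm{pop}}}(s)+h^{t_{\mathrm{pop}}}(s)$.
   Context: A transition system is $\mathcal T=\langle S,L,c,T,s_I,S_G\rangle$ with finite states $S$, finite labels $L$, cost function $c:L\to\mathbb R_{\ge0}$, transitions $T\subseteq S\times L\times S$, initial state $s_I$, goal states $S_G\subseteq S$. An information source $\sigma$ consists of a set $\mathcal I_\sigma$, $\iota_0^\sigma\in\mathcal I_\sigma$, $\mathrm{update}_\sigma:\mathcal I_\sigma\times T\to\mathcal I_\sigma$, $\mathrm{refine}_\sigma:\mathcal I_\sigma\times S\to\mathcal I_\sigma$. Reachable information: $\iota_n$ is reachable if obtained from $\iota_0^\sigma$ by a sequence of refine steps on states and update steps on transitions $e_1,\dots,e_n$, where each refined state and each origin of an updated transition is $s_I$ or the target of an earlier updated transition. A dynamic heuristic over $\sigma$ is $h:S\times\mathcal I_\sigma\to\mathbb R_{\ge0}\cup\{\infty\}$; it is dyn-monotonic if $h(s,\iota)\le h(s,\mathrm{update}_\sigma(\iota,t))$ and $h(s,\iota)\le h(s,\mathrm{refine}_\sigma(\iota,s'))$ for all reachable $\iota$, all $s,s'\in S$ and all $t\in T$. Parent source $\sigma_p$: $\mathcal I_{\sigma_p}$ = partial functions $S\rightharpoonup\mathbb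 R_{\ge0}\times(T\cup\{\bot\})$; $\iota_0=\{s_I\mapsto\langle0,\bot\rangle\}$; refine is the identity; $\mathrm{update}(\iota,\langle s,\ell,s'\rangle)$ with $\iota(s)=\langle g,\cdot\rangle$ changes only $s'$, setting it to $\langle g+c(\ell),\langle s,\ell,s'\rangle\rangle$ if $\iota(s')$ is undefined or has $g$-component $\ge g+c(\ell)$, otherwise unchanged. Dynamic A* takes $\mathcal T$, sources $\sigma_p,\sigma_h$, a dynamic heuristic $h$ over $\sigma_h$ and a Boolean flag \texttt{reeval}. Notation: at any moment $g(s)$ is the $g$-component of the current $\mathcal I(\sigma_p)(s)$ and $h(s)$ denotes $h(s,\mathcal I(\sigma_h))$ for the current $\mathcal I(\sigma_h)$. Open is a priority queue of entries $\langle s,g,h\rangle$ (duplicates allowed), popped by minimal stored value $g+h$ (ties arbitrary). Algorithm: 1. $\mathcal I(\sigma):=\iota_0^\sigma$ for both sources; $S_{\mathrm{known}}:=\{s_I\}$; Closed $:=\emptyset$; Open empty. If $h(s_I)<\infty$ insert $\langle s_I,g(s_I),h(s_I)\rangle$. 2. While Open is nonempty: pop an entry $\langle s,\hat g,\hat h\rangle$ of minimal $\hat g+\hat h$. If $s\in$ Closed, continue with the next iteration. Otherwise set $\mathcal I(\sigma):=\mathrm{refine}_\sigma(\mathcal I(\sigma),s)$ for both sources. If \texttt{reeval} is true and $\hat h<h(s)$: if $h(s)<\infty$ insert $\langle s,g(s),h(s)\rangle$; continue with the next iteration (this is a re-evaluation). Otherwise add $s$ to Closed ($s$ is expanded). If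 $s\in S_G$, return the path obtained by following the parent pointers of $\mathcal I(\sigma_p)$ from $s$ back to $s_I$. Otherwise, for each $t=\langle s,\ell,s'\rangle\in T$ in some order: let $old:=g(s')$ if $s'\in S_{\mathrm{known}}$ and undefined otherwise; set $\mathcal I(\sigma):=\mathrm{update}_\sigma(\mathcal I(\sigma),t)$ for both sources; add $s'$ to $S_{\mathrm{known}}$; if $h(s')=\infty$ skip $s'$; else if $old$ is undefined insert $\langle s',g(s'),h(s')\rangle$; else if $old>g(s')$, remove $s'$ from Closed if it is there (reopening) and insert $\langle s',g(s'),h(s')\rangle$. 3. Return "unsolvable". Times: the iterations of the while loop are numbered $i=1,2,\dots$ (iteration $i$ begins just before its pop); within iteration $i$ a step counter $j$ is $0$ at the start, becomes $1$ after the refine step, and increases by $1$ after each update step on a successor transition. Time $\langle i,j\rangle$ (time $\langle0,0\rangle$ is the initialization) is ordered lexicographically, and $g^{i,j}(s)$, $h^{i,j}(s)$ denote $g(s)$ and $h(s)$ with the information current at that time. *)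

theory Defs
  imports Complex_Main "HOL-Library.Multiset" "HOL-Library.Extended_Real"
begin

record ('s,'l) tsys =
  St :: "'s set"
  Lab :: "'l set"
  cost :: "'l \<Rightarrow> real"
  Tr :: "('s \<times> 'l \<times> 's) set"
  sI :: 's
  SG :: "'s set"

definition ts_wf :: "('s,'l) tsys \<Rightarrow> bool" where
  "ts_wf TS \<longleftrightarrow> finite (St TS) \<and> finite (Lab TS) \<and> (\<forall>l\<in>Lab TS. 0 \<le> cost TS l)
     \<and> Tr TS \<subseteq> St TS \<times> Lab TS \<times> St TS \<and> sI TS \<in> St TS \<and> SG TS \<subseteq> St TS"

text \<open>The set of information I_sigma is the type 'i.\<close>
record ('i,'s,'l) info_source =
  iota0 :: 'i
  upd :: "'i \<Rightarrow> ('s \<times> 'l \<times> 's) \<Rightarrow> 'i"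
  rfn :: "'i \<Rightarrow> 's \<Rightarrow> 'i"

text \<open>Reachable information, paired with the set of states that are s_I or targets
  of earlier updated transitions.\<close>
inductive_set reach_info :: "('s,'l) tsys \<Rightarrow> ('i,'s,'l) info_source \<Rightarrow> ('i \<times> 's set) set"
  for TS \<sigma> where
  init: "(iota0 \<sigma>, {sI TS}) \<in> reach_info TS \<sigma>"
| refine: "(\<iota>, K) \<in> reach_info TS \<sigma> \<Longrightarrow> s \<in> K \<Longrightarrow> (rfn \<sigma> \<iota> s, K) \<in> reach_info TS \<sigma>"
| update: "(\<iota>, K) \<in> reach_info TS \<sigma> \<Longrightarrow> (s, l, s') \<in> Tr TS \<Longrightarrow> s \<in> K \<Longrightarrow>
     (upd \<sigma> \<iota> (s, l, s'), insert s' K) \<in> reach_info TS \<sigma>"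

definition reachable_info :: "('s,'l) tsys \<Rightarrow> ('i,'s,'l) info_source \<Rightarrow> 'i \<Rightarrow> bool" where
  "reachable_info TS \<sigma> \<iota> \<longleftrightarrow> (\<exists>K. (\<iota>, K) \<in> reach_info TS \<sigma>)"

definition dyn_heuristic :: "('s \<Rightarrow> 'i \<Rightarrow> ereal) \<Rightarrow> bool" where
  "dyn_heuristic h \<longleftrightarrow> (\<forall>s \<iota>. 0 \<le> h s \<iota>)"

definition dyn_monotonic ::
  "('s,'l) tsys \<Rightarrow> ('i,'s,'l) info_source \<Rightarrow> ('s \<Rightarrow> 'i \<Rightarrow> ereal) \<Rightarrow> bool" where
  "dyn_monotonic TS \<sigma> h \<longleftrightarrow>
     (\<forall>\<iota>. reachable_info TS \<sigma> \<iota> \<longrightarrow>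
        (\<forall>s\<in>St TS. \<forall>t\<in>Tr TS. h s \<iota> \<le> h s (upd \<sigma> \<iota> t)) \<and>
        (\<forall>s\<in>St TS. \<forall>s'\<in>St TS. h s \<iota> \<le> h s (rfn \<sigma> \<iota> s')))"

type_synonym ('s,'l) pinfo = "'s \<Rightarrow> (real \<times> ('s \<times> 'l \<times> 's) option) option"

text \<open>None as second component encodes \<bottom>. If the origin has no entry (never happens
  in the algorithm) the update is the identity.\<close>
definition parent_upd :: "('l \<Rightarrow> real) \<Rightarrow> ('s,'l) pinfo \<Rightarrow> ('s \<times> 'l \<times> 's) \<Rightarrow> ('s,'l) pinfo" where
  "parent_upd c \<iota> t = (case t of (s, l, s') \<Rightarrow>
     (case \<iota> s of None \<Rightarrow> \<iota>
      | Some (g, _) \<Rightarrow>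
          (case \<iota> s' of None \<Rightarrow> \<iota>(s' \<mapsto> (g + c l, Some t))
           | Some (g', _) \<Rightarrow> if g + c l \<le> g' then \<iota>(s' \<mapsto> (g + c l, Some t)) else \<iota>)))"

definition parent_source :: "('s,'l) tsys \<Rightarrow> (('s,'l) pinfo, 's, 'l) info_source" where
  "parent_source TS = \<lparr>iota0 = [sI TS \<mapsto> (0, None)], upd = parent_upd (cost TS), rfn = (\<lambda>\<iota> s. \<iota>)\<rparr>"

definition gval :: "('s,'l) pinfo \<Rightarrow> 's \<Rightarrow> real" where
  "gval \<iota> s = fst (the (\<iota> s))"

type_synonym 's entry = "'s \<times> real \<times> ereal"

definition key :: "'s entry \<Rightarrow> ereal" where
  "key e = ereal (fst (snd e)) + snd (snd e)"

record ('i,'s,'l) config =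
  ip :: "('s,'l) pinfo"
  ih :: 'i
  known :: "'s set"
  closed :: "'s set"
  opn :: "'s entry multiset"

definition gcur :: "('i,'s,'l) config \<Rightarrow> 's \<Rightarrow> real" where
  "gcur C s = gval (ip C) s"

definition init_config ::
  "('s,'l) tsys \<Rightarrow> ('i,'s,'l) info_source \<Rightarrow> ('s \<Rightarrow> 'i \<Rightarrow> ereal) \<Rightarrow> ('i,'s,'l) config" where
  "init_config TS \<sigma>h h =
     \<lparr>ip = iota0 (parent_source TS), ih = iota0 \<sigma>h, known = {sI TS}, closed = {},
      opn = (if h (sI TS) (iota0 \<sigma>h) < \<infinity>
             then {# (sI TS, gval (iota0 (parent_source TS)) (sI TS), h (sI TS) (iota0 \<sigma>h)) #}
             else {#})\<rparr>"

definition succ_step ::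
  "('s,'l) tsys \<Rightarrow> ('i,'s,'l) info_source \<Rightarrow> ('s \<Rightarrow> 'i \<Rightarrow> ereal) \<Rightarrow>
   ('s \<times> 'l \<times> 's) \<Rightarrow> ('i,'s,'l) config \<Rightarrow> ('i,'s,'l) config" where
  "succ_step TS \<sigma>h h t C = (case t of (s, l, s') \<Rightarrow>
     let old = (if s' \<in> known C then map_option fst (ip C s') else None);
         ip' = upd (parent_source TS) (ip C) t;
         ih' = upd \<sigma>h (ih C) t;
         C1 = C\<lparr>ip := ip', ih := ih', known := insert s' (known C)\<rparr>;
         g' = gval ip' s';
         h' = h s' ih'
     in if h' = \<infinity> then C1
        else (case old of
                None \<Rightarrow> C1\<lparr>opn := add_mset (s', g', h') (opn C)\<rparr>
              | Some go \<Rightarrow> if g' < go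
                           then C1\<lparr>closed := closed C - {s'}, opn := add_mset (s', g', h') (opn C)\<rparr>
                           else C1))"

text \<open>One (non-terminating) iteration of the while loop: configuration at time <i,0>
  to configuration at time <i+1,0>. The popped entry is any entry of minimal key,
  successors are processed in an arbitrary order. An iteration that returns a
  solution has no successor configuration.\<close>
definition iter_step ::
  "('s,'l) tsys \<Rightarrow> ('i,'s,'l) info_source \<Rightarrow> ('s \<Rightarrow> 'i \<Rightarrow> ereal) \<Rightarrow> bool \<Rightarrow>
   ('i,'s,'l) config \<Rightarrow> ('i,'s,'l) config \<Rightarrow> bool" where
  "iter_step TS \<sigma>h h reeval C C' \<longleftrightarrow>
     (\<exists>e \<in># opn C. (\<forall>e' \<in># opn C. key e \<le> key e') \<and>
        (let s = fst e; O' = opn C - {#e#} in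
         if s \<in> closed C then C' = C\<lparr>opn := O'\<rparr>
         else
           (let ipr = rfn (parent_source TS) (ip C) s;
                ihr = rfn \<sigma>h (ih C) s;
                C1 = C\<lparr>ip := ipr, ih := ihr, opn := O'\<rparr>
            in if reeval \<and> snd (snd e) < h s ihr
               then C' = (if h s ihr < \<infinity> then C1\<lparr>opn := add_mset (s, gval ipr s, h s ihr) O'\<rparr> else C1)
               else s \<notin> SG TS \<and>
                    (\<exists>ts. distinct ts \<and> set ts = {t \<in> Tr TS. fst t = s} \<and>
                          C' = fold (succ_step TS \<sigma>h h) ts (C1\<lparr>closed := insert s (closed C)\<rparr>)))))"

end

theory Submission
  imports Defs
begin

text \<open>Invariant: every known, unclosed state $x$ with finite heuristic value has an Open
  entry $\langle x,g',h'\rangle$ with $g' \le g(x)$ and $h' \le h(x)$. Updates and refinements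
  can only lower $g$ (parent source) and raise $h$ (dyn-monotonicity), so such a witness stays
  valid; when $g(x)$ drops or $x$ is first generated, and on every re-evaluation, an entry with
  the current values is pushed. A popped entry of minimal key is then bounded by the witness of
  its own state.\<close>

lemma reach_info_subset_states:
  assumes "ts_wf TS" "(\<iota>, K) \<in> reach_info TS \<sigma>"
  shows "K \<subseteq> St TS"
  using assms(2) by induction (use assms(1) in \<open>auto simp: ts_wf_def\<close>)

lemma dyn_monotonicD_upd:
  assumes "dyn_monotonic TS \<sigma> h" "(\<iota>, K) \<in> reach_info TS \<sigma>" "x \<in> St TS" "t \<in> Tr TS"
  shows "h x \<iota> \<le> h x (upd \<sigma> \<iota> t)"
  using assms unfolding dyn_monotonic_def reachable_info_def by blast

lemma dyn_monotonicD_rfn: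
  assumes "dyn_monotonic TS \<sigma> h" "(\<iota>, K) \<in> reach_info TS \<sigma>" "x \<in> St TS" "y \<in> St TS"
  shows "h x \<iota> \<le> h x (rfn \<sigma> \<iota> y)"
  using assms unfolding dyn_monotonic_def reachable_info_def by blast

lemma parent_upd_other: "x \<noteq> b \<Longrightarrow> parent_upd c \<iota> (a, l, b) x = \<iota> x"
  by (auto simp: parent_upd_def split: option.splits)

lemma dom_parent_upd: "a \<in> dom \<iota> \<Longrightarrow> dom (parent_upd c \<iota> (a, l, b)) = insert b (dom \<iota>)"
  by (auto simp: parent_upd_def split: option.splits if_splits)

lemma gval_parent_upd_le: "\<iota> b \<noteq> None \<Longrightarrow> gval (parent_upd c \<iota> (a, l, b)) b \<le> gval \<iota> b"
  by (auto simp: parent_upd_def gval_def split: option.splits)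

definition covered_by_open :: "('s \<Rightarrow> 'i \<Rightarrow> ereal) \<Rightarrow> ('i,'s,'l) config \<Rightarrow> 's \<Rightarrow> bool" where
  "covered_by_open h C x \<longleftrightarrow> x \<notin> closed C \<longrightarrow> h x (ih C) < \<infinity> \<longrightarrow>
     (\<exists>g' h'. (x, g', h') \<in># opn C \<and> g' \<le> gcur C x \<and> h' \<le> h x (ih C))"

lemma covered_by_open_mono:
  assumes "covered_by_open h C x"
    and "x \<notin> closed D \<Longrightarrow> x \<notin> closed C"
    and "h x (ih C) \<le> h x (ih D)"
    and "gcur D x = gcur C x"
    and "\<And>g' h'. (x, g', h') \<in># opn C \<Longrightarrow> (x, g', h') \<in># opn D"
  shows "covered_by_open h D x"
  unfolding covered_by_open_def
proof (intro impI)
  assume "x \<notin> closed D" "h x (ih D) < \<infinity>"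
  then obtain g' h' where "(x, g', h') \<in># opn C" "g' \<le> gcur C x" "h' \<le> h x (ih C)"
    using assms(1-3) unfolding covered_by_open_def by (meson order.strict_trans1)
  then show "\<exists>g' h'. (x, g', h') \<in># opn D \<and> g' \<le> gcur D x \<and> h' \<le> h x (ih D)"
    using assms(3-5) by (metis order.trans)
qed

definition astar_inv ::
  "('s,'l) tsys \<Rightarrow> ('i,'s,'l) info_source \<Rightarrow> ('s \<Rightarrow> 'i \<Rightarrow> ereal) \<Rightarrow> ('i,'s,'l) config \<Rightarrow> bool" where
  "astar_inv TS \<sigma>h h C \<longleftrightarrow> (ih C, known C) \<in> reach_info TS \<sigma>h \<and> known C \<subseteq> dom (ip C)
     \<and> (\<forall>e\<in>#opn C. fst e \<in> known C) \<and> (\<forall>x\<in>known C. covered_by_open h C x)"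

lemma astar_inv_init_config: "astar_inv TS \<sigma>h h (init_config TS \<sigma>h h)"
  by (auto simp: astar_inv_def covered_by_open_def init_config_def parent_source_def gcur_def
      intro: reach_info.init)

lemma succ_step_fields:
  "ip (succ_step TS \<sigma>h h (a, l, b) C) = parent_upd (cost TS) (ip C) (a, l, b)"
  "ih (succ_step TS \<sigma>h h (a, l, b) C) = upd \<sigma>h (ih C) (a, l, b)"
  "known (succ_step TS \<sigma>h h (a, l, b) C) = insert b (known C)"
  "closed C - {b} \<subseteq> closed (succ_step TS \<sigma>h h (a, l, b) C)"
  "closed (succ_step TS \<sigma>h h (a, l, b) C) \<subseteq> closed C"
  "opn C \<subseteq># opn (succ_step TS \<sigma>h h (a, l, b) C)"
  "e \<in># opn (succ_step TS \<sigma>h h (a, l, b) C) \<Longrightarrow> e \<in># opn C \<or> fst e = b"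
  by (auto simp: succ_step_def Let_def parent_source_def split: option.splits if_splits)

lemma succ_step_target_cases:
  "h b (ih (succ_step TS \<sigma>h h (a, l, b) C)) = \<infinity>
   \<or> (b, gcur (succ_step TS \<sigma>h h (a, l, b) C) b, h b (ih (succ_step TS \<sigma>h h (a, l, b) C)))
        \<in># opn (succ_step TS \<sigma>h h (a, l, b) C)
   \<or> b \<in> known C \<and> gcur (succ_step TS \<sigma>h h (a, l, b) C) b = gcur C b
        \<and> closed (succ_step TS \<sigma>h h (a, l, b) C) = closed C \<and> opn (succ_step TS \<sigma>h h (a, l, b) C) = opn C"
proof -
  have "gval (parent_upd (cost TS) (ip C) (a, l, b)) b \<le> gval (ip C) b" if "ip C b \<noteq> None"
    using that by (rule gval_parent_upd_le)
  then show ?thesis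
    by (cases "ip C b") (auto simp: succ_step_def Let_def parent_source_def gcur_def gval_def)
qed

lemma astar_inv_succ_step:
  assumes wf: "ts_wf TS" and mon: "dyn_monotonic TS \<sigma>h h"
    and inv: "astar_inv TS \<sigma>h h C" and t: "(a, l, b) \<in> Tr TS" and a: "a \<in> known C"
  shows "astar_inv TS \<sigma>h h (succ_step TS \<sigma>h h (a, l, b) C)"
proof -
  let ?D = "succ_step TS \<sigma>h h (a, l, b) C"
  have reach: "(ih C, known C) \<in> reach_info TS \<sigma>h" and dom: "known C \<subseteq> dom (ip C)"
    and entries: "\<forall>e\<in>#opn C. fst e \<in> known C" and cov: "\<forall>x\<in>known C. covered_by_open h C x"
    using inv unfolding astar_inv_def by auto
  have reach': "(ih ?D, known ?D) \<in> reach_info TS \<sigma>h"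
    using reach_info.update[OF reach t a] by (simp add: succ_step_fields)
  have h_mono: "h x (ih C) \<le> h x (ih ?D)" if "x \<in> known ?D" for x
    using dyn_monotonicD_upd[OF mon reach _ t] reach_info_subset_states[OF wf reach'] that
    by (auto simp: succ_step_fields)
  have "covered_by_open h ?D x" if x: "x \<in> known ?D" for x
  proof (cases "x = b")
    case True
    from succ_step_target_cases[where TS=TS and \<sigma>h=\<sigma>h and h=h and a=a and l=l and b=b and C=C]
    show ?thesis
    proof (elim disjE conjE)
      assume "h b (ih ?D) = \<infinity>"
      then show ?thesis by (simp add: True covered_by_open_def)
    next
      assume "(b, gcur ?D b, h b (ih ?D)) \<in># opn ?D"
      then show ?thesis unfolding True covered_by_open_def by blast
    next
      assume "b \<in> known C" "gcur ?D b = gcur C b" "closed ?D = closed C" "opn ?D = opn C"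
      then show ?thesis
        using True cov h_mono[OF x] covered_by_open_mono[of h C b ?D] by simp
    qed
  next
    case False
    show ?thesis
    proof (rule covered_by_open_mono)
      show "covered_by_open h C x" using cov x False by (simp add: succ_step_fields)
      show "x \<notin> closed C" if "x \<notin> closed ?D"
        using that False succ_step_fields(4)[of C b TS \<sigma>h h a l] by blast
      show "h x (ih C) \<le> h x (ih ?D)" by (rule h_mono[OF x])
      show "gcur ?D x = gcur C x"
        using False by (simp add: succ_step_fields gcur_def gval_def parent_upd_other)
      show "(x, g', h') \<in># opn ?D" if "(x, g', h') \<in># opn C" for g' h'
        using succ_step_fields(6) that by (rule mset_subset_eqD)
    qed
  qed
  moreover have "known ?D \<subseteq> dom (ip ?D)"
  proof -
    have "a \<in> dom (ip C)" using dom a by auto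
    then have "dom (ip ?D) = insert b (dom (ip C))" by (simp add: succ_step_fields dom_parent_upd)
    then show ?thesis using dom by (auto simp: succ_step_fields)
  qed
  moreover have "fst e \<in> known ?D" if "e \<in># opn ?D" for e
    using succ_step_fields(7)[OF that] entries by (auto simp: succ_step_fields)
  ultimately show ?thesis using reach' unfolding astar_inv_def by blast
qed

lemma astar_inv_fold_succ_step:
  assumes "ts_wf TS" "dyn_monotonic TS \<sigma>h h"
    and "astar_inv TS \<sigma>h h C" "s \<in> known C" "\<forall>t\<in>set ts. t \<in> Tr TS \<and> fst t = s"
  shows "astar_inv TS \<sigma>h h (fold (succ_step TS \<sigma>h h) ts C)"
  using assms(3-5)
proof (induction ts arbitrary: C)
  case (Cons t ts)
  obtain l b where t: "t = (s, l, b)" using Cons.prems(3) by (cases t) auto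
  have "astar_inv TS \<sigma>h h (succ_step TS \<sigma>h h t C)"
    using astar_inv_succ_step[OF assms(1,2) Cons.prems(1)] Cons.prems t by auto
  moreover have "s \<in> known (succ_step TS \<sigma>h h t C)"
    using Cons.prems(2) by (simp add: t succ_step_fields)
  ultimately show ?case using Cons by simp
qed simp

lemma iter_stepE:
  assumes "iter_step TS \<sigma>h h reeval C C'"
  obtains (skip) e where "e \<in># opn C" "fst e \<in> closed C" "C' = C\<lparr>opn := opn C - {#e#}\<rparr>"
  | (reevaluate) e where "e \<in># opn C" "fst e \<notin> closed C"
      "ip C' = ip C" "ih C' = rfn \<sigma>h (ih C) (fst e)" "known C' = known C" "closed C' = closed C"
      "opn C' = (if h (fst e) (ih C') < \<infinity> then add_mset (fst e, gcur C (fst e), h (fst e) (ih C')) (opn C - {#e#})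
                 else opn C - {#e#})"
  | (expand) e ts where "e \<in># opn C" "fst e \<notin> closed C" "set ts = {t \<in> Tr TS. fst t = fst e}"
      "C' = fold (succ_step TS \<sigma>h h) ts
              (C\<lparr>ih := rfn \<sigma>h (ih C) (fst e), opn := opn C - {#e#}, closed := insert (fst e) (closed C)\<rparr>)"
proof -
  obtain e where e: "e \<in># opn C" and step: "let s = fst e; O' = opn C - {#e#} in
         if s \<in> closed C then C' = C\<lparr>opn := O'\<rparr>
         else
           (let ipr = rfn (parent_source TS) (ip C) s;
                ihr = rfn \<sigma>h (ih C) s;
                C1 = C\<lparr>ip := ipr, ih := ihr, opn := O'\<rparr>
            in if reeval \<and> snd (snd e) < h s ihr
               then C' = (if h s ihr < \<infinity> then C1\<lparr>opn := add_mset (s, gval ipr s, h s ihr) O'\<rparr> else C1)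
               else s \<notin> SG TS \<and>
                    (\<exists>ts. distinct ts \<and> set ts = {t \<in> Tr TS. fst t = s} \<and>
                          C' = fold (succ_step TS \<sigma>h h) ts (C1\<lparr>closed := insert s (closed C)\<rparr>)))"
    using assms unfolding iter_step_def by blast
  consider "fst e \<in> closed C" | "fst e \<notin> closed C" "reeval \<and> snd (snd e) < h (fst e) (rfn \<sigma>h (ih C) (fst e))"
    | "fst e \<notin> closed C" "\<not> (reeval \<and> snd (snd e) < h (fst e) (rfn \<sigma>h (ih C) (fst e)))"
    by blast
  then show thesis
  proof cases
    case 1
    then show thesis using e step by (intro skip) (simp_all add: Let_def)
  next
    case 2
    then show thesis using e step
      by (intro reevaluate) (auto simp: Let_def parent_source_def gcur_def)
  next
    case 3
    then obtain ts where "set ts = {t \<in> Tr TS. fst t = fst e}"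
      "C' = fold (succ_step TS \<sigma>h h) ts
              (C\<lparr>ih := rfn \<sigma>h (ih C) (fst e), opn := opn C - {#e#}, closed := insert (fst e) (closed C)\<rparr>)"
      using step by (auto simp: Let_def parent_source_def)
    with 3 e show thesis by (intro expand)
  qed
qed

lemma astar_inv_iter_step:
  assumes wf: "ts_wf TS" and mon: "dyn_monotonic TS \<sigma>h h"
    and inv: "astar_inv TS \<sigma>h h C" and step: "iter_step TS \<sigma>h h reeval C C'"
  shows "astar_inv TS \<sigma>h h C'"
proof -
  have reach: "(ih C, known C) \<in> reach_info TS \<sigma>h" and dom: "known C \<subseteq> dom (ip C)"
    and entries: "\<forall>e\<in>#opn C. fst e \<in> known C" and cov: "\<forall>x\<in>known C. covered_by_open h C x"
    using inv unfolding astar_inv_def by auto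
  have states: "known C \<subseteq> St TS" by (rule reach_info_subset_states[OF wf reach])
  have popped: "covered_by_open h D x"
    if "x \<in> known C" "x \<noteq> fst e" "ip D = ip C" "closed C - {fst e} \<subseteq> closed D"
      "ih D = ih C \<or> ih D = rfn \<sigma>h (ih C) (fst e)" "e \<in># opn C" "opn C - {#e#} \<subseteq># opn D"
    for x D e
  proof (rule covered_by_open_mono)
    have "x \<in> St TS" "fst e \<in> St TS" using that states entries by auto
    then show "h x (ih C) \<le> h x (ih D)"
      using that dyn_monotonicD_rfn[OF mon reach] by auto
    show "(x, g', h') \<in># opn D" if "(x, g', h') \<in># opn C" for g' h'
    proof -
      have "(x, g', h') \<noteq> e" using \<open>x \<noteq> fst e\<close> by auto
      with that have "(x, g', h') \<in># opn C - {#e#}" by (simp add: in_diff_count)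
      then show ?thesis using \<open>opn C - {#e#} \<subseteq># opn D\<close> by (rule mset_subset_eqD[rotated])
    qed
  qed (use that cov in \<open>auto simp: gcur_def\<close>)
  from step show ?thesis
  proof (cases rule: iter_stepE)
    case (skip e)
    have "covered_by_open h C' x" if "x \<in> known C'" for x
      using that skip popped[where x=x and D=C' and e=e] by (cases "x = fst e") (auto simp: covered_by_open_def)
    then show ?thesis using skip reach dom entries
      by (auto simp: astar_inv_def dest: in_diffD)
  next
    case (reevaluate e)
    have "covered_by_open h C' x" if "x \<in> known C'" for x
      using that reevaluate popped[where x=x and D=C' and e=e]
      by (cases "x = fst e") (auto simp: covered_by_open_def gcur_def split: if_splits)
    moreover have "(ih C', known C') \<in> reach_info TS \<sigma>h"
      using reach_info.refine[OF reach] reevaluate entries by auto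
    ultimately show ?thesis using reevaluate dom entries
      by (auto simp: astar_inv_def dest: in_diffD split: if_splits)
  next
    case (expand e ts)
    let ?E = "C\<lparr>ih := rfn \<sigma>h (ih C) (fst e), opn := opn C - {#e#}, closed := insert (fst e) (closed C)\<rparr>"
    have "covered_by_open h ?E x" if "x \<in> known ?E" for x
      using that expand popped[where x=x and D="?E" and e=e] by (cases "x = fst e") (auto simp: covered_by_open_def)
    moreover have "(ih ?E, known ?E) \<in> reach_info TS \<sigma>h"
      using reach_info.refine[OF reach] expand entries by auto
    ultimately have "astar_inv TS \<sigma>h h ?E"
      using dom entries by (auto simp: astar_inv_def dest: in_diffD)
    then show ?thesis
      using astar_inv_fold_succ_step[OF wf mon] expand entries by auto
  qed
qed

lemma astar_inv_reachable:
  assumes "ts_wf TS" "dyn_monotonic TS \<sigma>h h"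
    and "(iter_step TS \<sigma>h h reeval)\<^sup>*\<^sup>* (init_config TS \<sigma>h h) C"
  shows "astar_inv TS \<sigma>h h C"
  using assms(3)
  by induction (auto intro: astar_inv_init_config astar_inv_iter_step[OF assms(1,2)])

theorem lemma4:
  fixes TS :: "('s,'l) tsys" and \<sigma>h :: "('i,'s,'l) info_source"
    and h :: "'s \<Rightarrow> 'i \<Rightarrow> ereal" and reeval :: bool
    and C :: "('i,'s,'l) config" and s :: 's and gh :: real and hh :: ereal
  assumes "ts_wf TS"
    and "dyn_heuristic h"
    and "dyn_monotonic TS \<sigma>h h"
    and "(iter_step TS \<sigma>h h reeval)\<^sup>*\<^sup>* (init_config TS \<sigma>h h) C"
    and "(s, gh, hh) \<in># opn C"
    and "\<forall>e \<in># opn C. key (s, gh, hh) \<le> key e"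
    and "s \<notin> closed C"
  shows "key (s, gh, hh) \<le> ereal (gcur C s) + h s (ih C)"
proof (cases "h s (ih C) < \<infinity>")
  case True
  have "astar_inv TS \<sigma>h h C" using astar_inv_reachable assms(1,3,4) .
  then have "covered_by_open h C s" using assms(5) unfolding astar_inv_def by force
  then obtain g' h' where w: "(s, g', h') \<in># opn C" "g' \<le> gcur C s" "h' \<le> h s (ih C)"
    using True assms(7) unfolding covered_by_open_def by blast
  have "key (s, gh, hh) \<le> key (s, g', h')" using assms(6) w(1) by blast
  also have "\<dots> \<le> ereal (gcur C s) + h s (ih C)"
    using w(2,3) by (simp add: key_def add_mono)
  finally show ?thesis .
qed simp

end
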